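(* Every program $P$ of the reactive language defined in the context is deterministic: coinductively, for every set of input signals $I\subseteq \mathit{Int}$, if $P\xrightarrow{I/O_1}P_1$ and $P\xrightarrow{I/O_2}P_2$, then $O_1=O_2$, $P_1$ and $P_2$ are equal up to renaming, and $P_1$ is again deterministic in the same sense.
   Context: Fix a countable set of signal names $s,s',\dots$ and a finite set $\mathit{Int}$ of signal names (the observable interface). A signal environment $E$ is a partial function from signal names to $\{\mathit{true},\mathit{false}\}$ whose finite domain $\mathrm{dom}(E)$ contains $\mathit{Int}$; $E[s:=\mathit{true}]$ denotes update. Threads are given by the grammar $T ::= () \mid (\mathsf{emit}\ s) \mid (\mathsf{local}\ s\ T) \mid (\mathsf{thread}\ T) \mid (\mathsf{when}\ s\ T) \mid (\mathsf{watch}\ s\ T) \mid A(\vec s) \mid (T;T)$, where $A(\vec s)$ are thread identifiers with signal parameters, each defined by exactly one equation $A(\vec x)=T$; $\mathsf{local}\ s$ binds $s$ in $T$. $\mathrm{sig}(T)$ is the set of free signals of $T$, and $\mathrm{sig}(P)$ the union over threads of a multiset $P$. A program is a finite non-empty multiset of threads. Atomic thread execution $(T,E)\Rightarrow_P (T',E')$ ($P$ a multiset of spawned threads, $\cup$ multiset union) is the least relation closed under: (T1) $((),E)\Rightarrow_\emptyset((),E)$; (T2) $(\mathsf{emit}\ s,E)\Rightarrow_\emptyset((),E[s:=\mathit{true}])$; (T3) if $s'\notin\mathrm{dom}(E)$ and $([s'/s]T,E\cup\{s'\mapsto\mathit{false}\})\Rightarrow_P(T',E')$ then $(\mathsf{local}\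 s\ T,E)\Rightarrow_P(T',E')$; (T4) $(\mathsf{thread}\ T,E)\Rightarrow_{\{T\}}((),E)$; (T5) if $A(\vec x)=T$ and $([\vec s/\vec x]T,E)\Rightarrow_P(T',E')$ then $(A(\vec s),E)\Rightarrow_P(T',E')$; (T6) if $E(s)=\mathit{false}$ then $(\mathsf{when}\ s\ T,E)\Rightarrow_\emptyset(\mathsf{when}\ s\ T,E)$; (T7) if $E(s)=\mathit{true}$ and $(T,E)\Rightarrow_P((),E')$ then $(\mathsf{when}\ s\ T,E)\Rightarrow_P((),E')$; (T8) if $E(s)=\mathit{true}$, $(T,E)\Rightarrow_P(T',E')$, $T'\neq()$ then $(\mathsf{when}\ s\ T,E)\Rightarrow_P(\mathsf{when}\ s\ T',E')$; (T9) if $(T,E)\Rightarrow_P((),E')$ then $(\mathsf{watch}\ s\ T,E)\Rightarrow_P((),E')$; (T10) if $(T,E)\Rightarrow_P(T',E')$, $T'\neq()$ then $(\mathsf{watch}\ s\ T,E)\Rightarrow_P(\mathsf{watch}\ s\ T',E')$; (T11) if $(T_1,E)\Rightarrow_{P_1}((),E_1)$ and $(T_2,E_1)\Rightarrow_{P_2}(T',E')$ then $(T_1;T_2,E)\Rightarrow_{P_1\cup P_2}(T',E')$; (T12) if $(T_1,E)\Rightarrow_P(T',E')$, $T'\neq()$ then $(T_1;T_2,E)\Rightarrow_P(T';T_2,E')$. $(T,E)$ is stuck, written $(T,E)\ddagger$, if $(T,E)\Rightarrow_\emptyset(T,E)$. The end-of-instant abort function: $\lfloor P\rfloor_E=\{\lfloor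 T\rfloor_E\mid T\in P\}$ (multiset), $\lfloor()\rfloor_E=()$, $\lfloor T;T'\rfloor_E=\lfloor T\rfloor_E;T'$, $\lfloor\mathsf{when}\ s\ T\rfloor_E=\mathsf{when}\ s\ \lfloor T\rfloor_E$ if $E(s)=\mathit{true}$ and $\mathsf{when}\ s\ T$ otherwise, $\lfloor\mathsf{watch}\ s\ T\rfloor_E=()$ if $E(s)=\mathit{true}$ and $\mathsf{watch}\ s\ \lfloor T\rfloor_E$ otherwise. Instant execution $(P,E)\Downarrow(P'',E'')$ is the least relation with: (P1) if $(T,E)\ddagger$ for all $T\in P$ then $(P,E)\Downarrow(\lfloor P\rfloor_E,E)$; (P2) if some $T\in P$ has $\neg(T,E)\ddagger$, $(T,E)\Rightarrow_{P'}(T',E')$ and $((P\setminus\{T\})\cup\{T'\}\cup P',E')\Downarrow(P'',E'')$, then $(P,E)\Downarrow(P'',E'')$ (the choice of $T$ is nondeterministic). Input/output transitions: for $I,O\subseteq\mathit{Int}$, $P\xrightarrow{I/O}P'$ iff $(P,E_{I,P})\Downarrow(P',E')$ and $O=\{s\in\mathit{Int}\mid E'(s)=\mathit{true}\}$, where $E_{I,P}(s)=\mathit{true}$ if $s\in I$, $\mathit{false}$ if $s\in(\mathit{Int}\cup\mathrm{sig}(P))\setminus I$, undefined otherwise. Two programs $P,P'$ are equal up to renaming if there is a bijection $\mathrm{sig}(P)\to\mathrm{sig}(P')$ that is the identity on $\mathit{Int}$ and whose application to $P$ yields $P'$. A program $P$ is deterministic (coinductive definition: the greatest predicate such that) for every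 $I$, whenever $P\xrightarrow{I/O_1}P_1$ and $P\xrightarrow{I/O_2}P_2$, then $O_1=O_2$, $P_1=P_2$ up to renaming, and $P_1$ is deterministic. *)

theory Defs
  imports Main "HOL-Library.Multiset"
begin

text \<open>Binders are represented in locally nameless style: a signal reference is
  either a free name or a de Bruijn index bound by an enclosing local.
  This makes alpha-equivalent threads syntactically equal and makes
  the substitution of the rules capture-avoiding.\<close>

type_synonym sig = nat
type_synonym ident = nat

datatype sref = FreeS sig | BoundS nat

datatype thread =
    TNil
  | Emit sref
  | Local thread
  | Spawn thread
  | When sref thread
  | Watch sref thread
  | Call ident "sref list"
  | Seq thread thread

type_synonym env = "sig \<Rightarrow> bool option"

type_synonym tdefs = "ident \<Rightarrow> sig list \<times> thread"

fun sigr :: "sref \<Rightarrow> sig set" where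
  "sigr (FreeS s) = {s}"
| "sigr (BoundS _) = {}"

fun sigT :: "thread \<Rightarrow> sig set" where
  "sigT TNil = {}"
| "sigT (Emit r) = sigr r"
| "sigT (Local T) = sigT T"
| "sigT (Spawn T) = sigT T"
| "sigT (When r T) = sigr r \<union> sigT T"
| "sigT (Watch r T) = sigr r \<union> sigT T"
| "sigT (Call A rs) = (\<Union>r\<in>set rs. sigr r)"
| "sigT (Seq T1 T2) = sigT T1 \<union> sigT T2"

definition sigP :: "thread multiset \<Rightarrow> sig set" where
  "sigP P = (\<Union>T\<in>set_mset P. sigT T)"

fun lcr :: "nat \<Rightarrow> sref \<Rightarrow> bool" where
  "lcr k (FreeS _) = True"
| "lcr k (BoundS i) = (i < k)"

fun lc_at :: "nat \<Rightarrow> thread \<Rightarrow> bool" where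
  "lc_at k TNil = True"
| "lc_at k (Emit r) = lcr k r"
| "lc_at k (Local T) = lc_at (Suc k) T"
| "lc_at k (Spawn T) = lc_at k T"
| "lc_at k (When r T) = (lcr k r \<and> lc_at k T)"
| "lc_at k (Watch r T) = (lcr k r \<and> lc_at k T)"
| "lc_at k (Call A rs) = (\<forall>r\<in>set rs. lcr k r)"
| "lc_at k (Seq T1 T2) = (lc_at k T1 \<and> lc_at k T2)"

abbreviation lc :: "thread \<Rightarrow> bool" where "lc T \<equiv> lc_at 0 T"

fun openr :: "nat \<Rightarrow> sig \<Rightarrow> sref \<Rightarrow> sref" where
  "openr k s (FreeS x) = FreeS x"
| "openr k s (BoundS i) = (if i = k then FreeS s else BoundS i)"

fun openT :: "nat \<Rightarrow> sig \<Rightarrow> thread \<Rightarrow> thread" where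
  "openT k s TNil = TNil"
| "openT k s (Emit r) = Emit (openr k s r)"
| "openT k s (Local T) = Local (openT (Suc k) s T)"
| "openT k s (Spawn T) = Spawn (openT k s T)"
| "openT k s (When r T) = When (openr k s r) (openT k s T)"
| "openT k s (Watch r T) = Watch (openr k s r) (openT k s T)"
| "openT k s (Call A rs) = Call A (map (openr k s) rs)"
| "openT k s (Seq T1 T2) = Seq (openT k s T1) (openT k s T2)"

fun renr :: "(sig \<Rightarrow> sig) \<Rightarrow> sref \<Rightarrow> sref" where
  "renr f (FreeS x) = FreeS (f x)"
| "renr f (BoundS i) = BoundS i"

fun renT :: "(sig \<Rightarrow> sig) \<Rightarrow> thread \<Rightarrow> thread" where
  "renT f TNil = TNil"
| "renT f (Emit r) = Emit (renr f r)"
| "renT f (Local T) = Local (renT f T)"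
| "renT f (Spawn T) = Spawn (renT f T)"
| "renT f (When r T) = When (renr f r) (renT f T)"
| "renT f (Watch r T) = Watch (renr f r) (renT f T)"
| "renT f (Call A rs) = Call A (map (renr f) rs)"
| "renT f (Seq T1 T2) = Seq (renT f T1) (renT f T2)"

definition substf :: "sig list \<Rightarrow> sig list \<Rightarrow> sig \<Rightarrow> sig" where
  "substf xs ss y = (case map_of (zip xs ss) y of Some s \<Rightarrow> s | None \<Rightarrow> y)"

fun envv :: "env \<Rightarrow> sref \<Rightarrow> bool option" where
  "envv E (FreeS s) = E s"
| "envv E (BoundS _) = None"

inductive step :: "tdefs \<Rightarrow> thread \<Rightarrow> env \<Rightarrow> thread multiset \<Rightarrow> thread \<Rightarrow> env \<Rightarrow> bool"
  for D :: tdefs where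
  T1: "step D TNil E {#} TNil E"
| T2: "step D (Emit (FreeS s)) E {#} TNil (E(s \<mapsto> True))"
| T3: "\<lbrakk> E s' = None; step D (openT 0 s' T) (E(s' \<mapsto> False)) P T' E' \<rbrakk>
       \<Longrightarrow> step D (Local T) E P T' E'"
| T4: "step D (Spawn T) E {#T#} TNil E"
| T5: "\<lbrakk> D A = (xs, T); length xs = length ss;
         step D (renT (substf xs ss) T) E P T' E' \<rbrakk>
       \<Longrightarrow> step D (Call A (map FreeS ss)) E P T' E'"
| T6: "envv E r = Some False \<Longrightarrow> step D (When r T) E {#} (When r T) E"
| T7: "\<lbrakk> envv E r = Some True; step D T E P TNil E' \<rbrakk>
       \<Longrightarrow> step D (When r T) E P TNil E'"
| T8: "\<lbrakk> envv E r = Some True; step D T E P T' E'; T' \<noteq> TNil \<rbrakk>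
       \<Longrightarrow> step D (When r T) E P (When r T') E'"
| T9: "step D T E P TNil E' \<Longrightarrow> step D (Watch r T) E P TNil E'"
| T10: "\<lbrakk> step D T E P T' E'; T' \<noteq> TNil \<rbrakk>
       \<Longrightarrow> step D (Watch r T) E P (Watch r T') E'"
| T11: "\<lbrakk> step D T1 E P1 TNil E1; step D T2 E1 P2 T' E' \<rbrakk>
       \<Longrightarrow> step D (Seq T1 T2) E (P1 + P2) T' E'"
| T12: "\<lbrakk> step D T1 E P T' E'; T' \<noteq> TNil \<rbrakk>
       \<Longrightarrow> step D (Seq T1 T2) E P (Seq T' T2) E'"

definition stuck :: "tdefs \<Rightarrow> thread \<Rightarrow> env \<Rightarrow> bool" where
  "stuck D T E \<longleftrightarrow> step D T E {#} T E"

text \<open>End-of-instant abort function. It is only specified by the paper on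
  (), ;, when and watch; on the remaining forms (which are never stuck)
  it is taken to be the identity.\<close>
fun abortT :: "env \<Rightarrow> thread \<Rightarrow> thread" where
  "abortT E TNil = TNil"
| "abortT E (Seq T T') = Seq (abortT E T) T'"
| "abortT E (When r T) = (if envv E r = Some True then When r (abortT E T) else When r T)"
| "abortT E (Watch r T) = (if envv E r = Some True then TNil else Watch r (abortT E T))"
| "abortT E T = T"

inductive instant :: "tdefs \<Rightarrow> thread multiset \<Rightarrow> env \<Rightarrow> thread multiset \<Rightarrow> env \<Rightarrow> bool"
  for D :: tdefs where
  P1: "(\<forall>T\<in>#P. stuck D T E) \<Longrightarrow> instant D P E (image_mset (abortT E) P) E"
| P2: "\<lbrakk> T \<in># P; \<not> stuck D T E; step D T E P' T' E';
         instant D ((P - {#T#}) + {#T'#} + P') E' P'' E'' \<rbrakk>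
       \<Longrightarrow> instant D P E P'' E''"

definition init_env :: "sig set \<Rightarrow> sig set \<Rightarrow> thread multiset \<Rightarrow> env" where
  "init_env Intf I P s =
     (if s \<in> I then Some True
      else if s \<in> (Intf \<union> sigP P) - I then Some False else None)"

definition io_trans :: "tdefs \<Rightarrow> sig set \<Rightarrow> thread multiset \<Rightarrow> sig set \<Rightarrow> sig set \<Rightarrow> thread multiset \<Rightarrow> bool" where
  "io_trans D Intf P I Out P' \<longleftrightarrow> I \<subseteq> Intf \<and> Out \<subseteq> Intf \<and>
     (\<exists>E'. instant D P (init_env Intf I P) P' E' \<and> Out = {s \<in> Intf. E' s = Some True})"

definition eq_ren :: "sig set \<Rightarrow> thread multiset \<Rightarrow> thread multiset \<Rightarrow> bool" where
  "eq_ren Intf P P' \<longleftrightarrow> (\<exists>f. bij_betw f (sigP P) (sigP P') \<and>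
     (\<forall>s\<in>sigP P \<inter> Intf. f s = s) \<and> image_mset (renT f) P = P')"

coinductive deterministic :: "tdefs \<Rightarrow> sig set \<Rightarrow> thread multiset \<Rightarrow> bool"
  for D :: tdefs and Intf :: "sig set" where
  "(\<And>I Out1 Out2 P1 P2. \<lbrakk> I \<subseteq> Intf; io_trans D Intf P I Out1 P1; io_trans D Intf P I Out2 P2 \<rbrakk>
      \<Longrightarrow> Out1 = Out2 \<and> eq_ren Intf P1 P2 \<and> deterministic D Intf P1)
   \<Longrightarrow> deterministic D Intf P"

definition wf_defs :: "tdefs \<Rightarrow> bool" where
  "wf_defs D \<longleftrightarrow> (\<forall>A. distinct (fst (D A)) \<and> lc (snd (D A)) \<and>
                       sigT (snd (D A)) \<subseteq> set (fst (D A)))"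

definition program :: "thread multiset \<Rightarrow> bool" where
  "program P \<longleftrightarrow> P \<noteq> {#} \<and> (\<forall>T\<in>#P. lc T)"

end

theory Submission
  imports Defs "HOL-Combinatorics.Transposition"
begin

(* An atomic step decomposes into micro steps, each performing one elementary action of a
   thread: emitting a signal, allocating a fresh local signal, spawning, unfolding a call, or
   discarding a terminated body. An instant is then a maximal interleaving of micro steps of the
   threads of the pool, followed by the end-of-instant abort.

   Micro steps of different threads commute, since they only set declared signals to true or
   allocate fresh ones (if both allocate the same fresh name, one of them is renamed first), and
   two micro steps of the same thread agree up to the choice of the fresh name. So the pool
   semantics is locally confluent up to renamings fixing the declared signals, and the diamond
   argument, by induction on the length of a maximal run, shows that all maximal runs from a state
   end in states that agree up to such a renaming. The initial environment declares the whole
   interface, so the outputs coincide and the resulting programs are equal up to renaming. This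
   holds for every program, hence determinism follows by coinduction. *)

section \<open>Renaming of signals\<close>

lemma renr_cong: "(\<forall>x\<in>sigr r. f x = g x) \<Longrightarrow> renr f r = renr g r"
  by (cases r) auto

lemma renT_cong: "(\<forall>x\<in>sigT T. f x = g x) \<Longrightarrow> renT f T = renT g T"
  by (induction T) (auto intro: renr_cong)

lemma renr_fix: "(\<forall>x\<in>sigr r. f x = x) \<Longrightarrow> renr f r = r"
  by (cases r) auto

lemma renT_fix: "(\<forall>x\<in>sigT T. f x = x) \<Longrightarrow> renT f T = T"
  by (induction T) (auto intro: renr_fix map_idI)

lemma renT_id [simp]: "renT id = id"
  by (rule ext) (simp add: renT_fix)

lemma renr_comp: "renr f (renr g r) = renr (f \<circ> g) r"
  by (cases r) auto

lemma renT_comp: "renT f (renT g T) = renT (f \<circ> g) T"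
  by (induction T) (auto simp: renr_comp comp_def)

lemma sigr_renr: "sigr (renr f r) = f ` sigr r"
  by (cases r) auto

lemma sigT_renT: "sigT (renT f T) = f ` sigT T"
  by (induction T) (auto simp: sigr_renr image_UN)

lemma renr_openr: "renr f (openr k s r) = openr k (f s) (renr f r)"
  by (cases r) auto

lemma renT_openT: "renT f (openT k s T) = openT k (f s) (renT f T)"
  by (induction T arbitrary: k) (auto simp: renr_openr)

lemma sigr_openr: "sigr (openr k s r) \<subseteq> insert s (sigr r)"
  by (cases r) auto

lemma sigT_openT: "sigT (openT k s T) \<subseteq> insert s (sigT T)"
  by (induction T arbitrary: k) (use sigr_openr in fastforce)+

lemma finite_sigr: "finite (sigr r)"
  by (cases r) auto

lemma finite_sigT: "finite (sigT T)"
  by (induction T) (auto simp: finite_sigr)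

lemma sigT_Call_FreeS [simp]: "sigT (Call A (map FreeS ss)) = set ss"
  by auto

lemma substf_in_params:
  assumes "length xs = length ss" "y \<in> set xs"
  shows "f (substf xs ss y) = substf xs (map f ss) y" and "substf xs ss y \<in> set ss"
proof -
  obtain s where s: "map_of (zip xs ss) y = Some s"
    using assms map_of_zip_is_None[OF assms(1), of y] by fastforce
  then show "f (substf xs ss y) = substf xs (map f ss) y"
    by (simp add: substf_def zip_map2 map_of_map)
  show "substf xs ss y \<in> set ss"
    using s map_of_SomeD[OF s] by (auto simp: substf_def dest: set_zip_rightD)
qed

lemma renT_renT_substf:
  assumes "length xs = length ss" "sigT T \<subseteq> set xs"
  shows "renT f (renT (substf xs ss) T) = renT (substf xs (map f ss)) T"
  unfolding renT_comp using assms substf_in_params(1)[OF assms(1)]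
  by (intro renT_cong) auto

lemma sigT_renT_substf:
  assumes "length xs = length ss" "sigT T \<subseteq> set xs"
  shows "sigT (renT (substf xs ss) T) \<subseteq> set ss"
  using assms substf_in_params(2)[OF assms(1)] by (auto simp: sigT_renT)

lemma wf_defs_sigT: "wf_defs D \<Longrightarrow> D A = (xs, T) \<Longrightarrow> sigT T \<subseteq> set xs"
  unfolding wf_defs_def by (metis fst_conv snd_conv)

lemma sigP_empty [simp]: "sigP {#} = {}"
  by (simp add: sigP_def)

lemma sigP_add_mset [simp]: "sigP (add_mset T P) = sigT T \<union> sigP P"
  by (simp add: sigP_def)

lemma sigP_union [simp]: "sigP (P + Q) = sigP P \<union> sigP Q"
  by (auto simp: sigP_def)

lemma sigP_diff_subset: "sigP (P - Q) \<subseteq> sigP P"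
  by (auto simp: sigP_def dest: in_diffD)

lemma sigT_subset_sigP: "T \<in># P \<Longrightarrow> sigT T \<subseteq> sigP P"
  by (auto simp: sigP_def)

lemma sigP_image_renT: "sigP (image_mset (renT f) P) = f ` sigP P"
  by (auto simp: sigP_def sigT_renT)

lemma finite_sigP: "finite (sigP P)"
  by (simp add: sigP_def finite_sigT)

lemma image_mset_renT_fix: "(\<forall>x\<in>sigP P. f x = x) \<Longrightarrow> image_mset (renT f) P = P"
  by (rule multiset.map_ident_strong) (auto simp: sigP_def intro: renT_fix)

definition renE :: "(sig \<Rightarrow> sig) \<Rightarrow> env \<Rightarrow> env" where
  "renE \<pi> E = E \<circ> inv \<pi>"

lemma renE_id [simp]: "renE id E = E"
  by (simp add: renE_def)

lemma renE_apply [simp]: "bij \<pi> \<Longrightarrow> renE \<pi> E (\<pi> x) = E x"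
  by (simp add: renE_def bij_is_inj)

lemma renE_comp: "bij \<pi> \<Longrightarrow> bij \<sigma> \<Longrightarrow> renE \<pi> (renE \<sigma> E) = renE (\<pi> \<circ> \<sigma>) E"
  by (simp add: renE_def o_inv_distrib comp_assoc)

lemma renE_fix:
  assumes "bij \<pi>" "\<And>x. E (\<pi> x) = E x"
  shows "renE \<pi> E = E"
proof
  fix x
  have "E (inv \<pi> x) = E (\<pi> (inv \<pi> x))" using assms(2) by simp
  with assms(1) show "renE \<pi> E x = E x"
    by (simp add: renE_def bij_is_surj surj_f_inv_f)
qed

lemma renE_fun_upd: "bij \<pi> \<Longrightarrow> renE \<pi> (E(s := v)) = (renE \<pi> E)(\<pi> s := v)"
  unfolding renE_def by (rule ext) (auto simp: bij_is_inj bij_inv_eq_iff)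

lemma envv_renE: "bij \<pi> \<Longrightarrow> envv (renE \<pi> E) (renr \<pi> r) = envv E r"
  by (cases r) auto

lemma abortT_renT: "bij \<pi> \<Longrightarrow> abortT (renE \<pi> E) (renT \<pi> T) = renT \<pi> (abortT E T)"
  by (induction T) (auto simp: envv_renE)

definition renaming_fixing :: "sig set \<Rightarrow> (sig \<Rightarrow> sig) \<Rightarrow> bool" where
  "renaming_fixing A \<pi> \<longleftrightarrow> bij \<pi> \<and> (\<forall>a\<in>A. \<pi> a = a)"

lemma renaming_fixing_id [simp]: "renaming_fixing A id"
  by (simp add: renaming_fixing_def)

lemma renaming_fixing_inv: "renaming_fixing A \<pi> \<Longrightarrow> renaming_fixing A (inv \<pi>)"
  unfolding renaming_fixing_def by (metis bij_imp_bij_inv bij_inv_eq_iff)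

lemma renaming_fixing_comp:
  "renaming_fixing A \<pi> \<Longrightarrow> renaming_fixing A \<sigma> \<Longrightarrow> renaming_fixing A (\<pi> \<circ> \<sigma>)"
  by (simp add: renaming_fixing_def bij_comp)

lemma renaming_fixing_subset: "renaming_fixing B \<pi> \<Longrightarrow> A \<subseteq> B \<Longrightarrow> renaming_fixing A \<pi>"
  by (auto simp: renaming_fixing_def)

lemma renaming_fixing_renr: "renaming_fixing A \<pi> \<Longrightarrow> sigr r \<subseteq> A \<Longrightarrow> renr \<pi> r = r"
  by (auto simp: renaming_fixing_def intro: renr_fix)

lemma renaming_fixing_renT: "renaming_fixing A \<pi> \<Longrightarrow> sigT T \<subseteq> A \<Longrightarrow> renT \<pi> T = T"
  by (auto simp: renaming_fixing_def intro: renT_fix)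

lemma renaming_fixing_image_mset:
  "renaming_fixing A \<pi> \<Longrightarrow> sigP P \<subseteq> A \<Longrightarrow> image_mset (renT \<pi>) P = P"
  by (auto simp: renaming_fixing_def intro: image_mset_renT_fix)

lemma renaming_fixing_transpose:
  "a \<notin> A \<Longrightarrow> b \<notin> A \<Longrightarrow> renaming_fixing A (transpose a b)"
  by (auto simp: renaming_fixing_def transpose_def)

lemma renE_transpose_fresh:
  assumes "E a = None" "E b = None"
  shows "renE (transpose a b) E = E"
  using assms by (intro renE_fix) (auto simp: transpose_def)

lemma fresh_local_renaming:
  assumes "E s = None" "E s' = None" "sigT T \<subseteq> dom E"
  shows "\<exists>\<pi>. renaming_fixing (dom E) \<pi> \<and> openT 0 s' T = renT \<pi> (openT 0 s T) \<and>
             E(s' \<mapsto> False) = renE \<pi> (E(s \<mapsto> False))"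
proof (intro exI conjI)
  let ?\<pi> = "transpose s s'"
  show fixing: "renaming_fixing (dom E) ?\<pi>"
    using assms(1,2) by (intro renaming_fixing_transpose) auto
  show "openT 0 s' T = renT ?\<pi> (openT 0 s T)"
    using renaming_fixing_renT[OF fixing assms(3)] by (simp add: renT_openT)
  show "E(s' \<mapsto> False) = renE ?\<pi> (E(s \<mapsto> False))"
    using assms(1,2) by (simp add: renE_fun_upd renE_transpose_fresh)
qed

section \<open>Micro steps\<close>

(* In this decomposition, T3 and T5 become a micro step that allocates the fresh signal or unfolds
   the call, followed by the micro steps of the body. *)
inductive micro :: "tdefs \<Rightarrow> thread \<Rightarrow> env \<Rightarrow> thread multiset \<Rightarrow> thread \<Rightarrow> env \<Rightarrow> bool"
  for D :: tdefs where
  micro_emit: "micro D (Emit (FreeS s)) E {#} TNil (E(s \<mapsto> True))"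
| micro_local: "E s = None \<Longrightarrow> micro D (Local T) E {#} (openT 0 s T) (E(s \<mapsto> False))"
| micro_spawn: "micro D (Spawn T) E {#T#} TNil E"
| micro_call: "\<lbrakk> D A = (xs, T); length xs = length ss \<rbrakk>
    \<Longrightarrow> micro D (Call A (map FreeS ss)) E {#} (renT (substf xs ss) T) E"
| micro_when_nil: "envv E r = Some True \<Longrightarrow> micro D (When r TNil) E {#} TNil E"
| micro_when: "\<lbrakk> envv E r = Some True; micro D T E P T' E' \<rbrakk>
    \<Longrightarrow> micro D (When r T) E P (When r T') E'"
| micro_watch_nil: "micro D (Watch r TNil) E {#} TNil E"
| micro_watch: "micro D T E P T' E' \<Longrightarrow> micro D (Watch r T) E P (Watch r T') E'"
| micro_seq_nil: "micro D (Seq TNil T2) E {#} T2 E"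
| micro_seq: "micro D T1 E P T1' E' \<Longrightarrow> micro D (Seq T1 T2) E P (Seq T1' T2) E'"

inductive_cases micro_TNilE [elim!]: "micro D TNil E P T' E'"
inductive_cases micro_EmitE: "micro D (Emit r) E P T' E'"
inductive_cases micro_LocalE: "micro D (Local T) E P T' E'"
inductive_cases micro_SpawnE: "micro D (Spawn T) E P T' E'"
inductive_cases micro_CallE: "micro D (Call A rs) E P T' E'"
inductive_cases micro_WhenE: "micro D (When r T) E P T' E'"
inductive_cases micro_WatchE: "micro D (Watch r T) E P T' E'"
inductive_cases micro_SeqE: "micro D (Seq T1 T2) E P T' E'"

definition trues :: "env \<Rightarrow> sig set" where
  "trues E = {s. E s = Some True}"

lemma envv_mono_trues: "trues E \<subseteq> trues G \<Longrightarrow> envv E r = Some True \<Longrightarrow> envv G r = Some True"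
  by (cases r) (auto simp: trues_def)

lemma micro_trues_mono: "micro D T E P T' E' \<Longrightarrow> trues E \<subseteq> trues E'"
  by (induction rule: micro.induct) (auto simp: trues_def)

lemma micro_dom_mono: "micro D T E P T' E' \<Longrightarrow> dom E \<subseteq> dom E'"
  by (induction rule: micro.induct) auto

lemma micro_sig_closed:
  assumes "micro D T E P T' E'" "wf_defs D" "sigT T \<subseteq> dom E"
  shows "sigT T' \<union> sigP P \<subseteq> dom E'"
  using assms
proof (induction rule: micro.induct)
  case (micro_local E s T)
  have "dom (E(s \<mapsto> False)) = insert s (dom E)" by simp
  moreover have "sigT (openT 0 s T) \<subseteq> insert s (dom E)"
    using micro_local sigT_openT[of 0 s T] by auto
  ultimately show ?case by (simp only: sigP_empty Un_empty_right)
next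
  case (micro_call A xs T ss E)
  then have "sigT (renT (substf xs ss) T) \<subseteq> set ss"
    by (simp add: sigT_renT_substf wf_defs_sigT)
  with micro_call show ?case by simp
next
  case (micro_when E r T P T' E')
  then show ?case using micro_dom_mono[OF micro_when.hyps(2)] by (simp, blast)
next
  case (micro_watch T E P T' E' r)
  then show ?case using micro_dom_mono[OF micro_watch.hyps(1)] by (simp, blast)
next
  case (micro_seq T1 E P T1' E' T2)
  then show ?case using micro_dom_mono[OF micro_seq.hyps(1)] by (simp, blast)
qed simp_all

definition elementary_update :: "env \<Rightarrow> env \<Rightarrow> bool" where
  "elementary_update E E' \<longleftrightarrow>
     E' = E \<or> (\<exists>s. E s \<noteq> None \<and> E' = E(s \<mapsto> True)) \<or> (\<exists>s. E s = None \<and> E' = E(s \<mapsto> False))"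

lemma micro_elementary_update:
  "micro D T E P T' E' \<Longrightarrow> sigT T \<subseteq> dom E \<Longrightarrow> elementary_update E E'"
  by (induction rule: micro.induct) (auto simp: elementary_update_def)

lemma elementary_update_changed:
  assumes "elementary_update E E'" "E' x \<noteq> E x"
  shows "E x \<noteq> None \<and> E' x = Some True \<or> E x = None \<and> E' x = Some False"
  using assms unfolding elementary_update_def by (cases "E x") (auto split: if_splits)

lemma elementary_update_alloc:
  assumes "elementary_update E E'" "E x = None" "E' x \<noteq> None"
  shows "E' = E(x \<mapsto> False)"
  using assms unfolding elementary_update_def by (metis fun_upd_apply)

lemma elementary_update_finite_dom:
  "elementary_update E E' \<Longrightarrow> finite (dom E) \<Longrightarrow> finite (dom E')"
  unfolding elementary_update_def by auto

definition env_patch :: "env \<Rightarrow> env \<Rightarrow> env \<Rightarrow> env" where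
  "env_patch E E' G = (\<lambda>x. if E' x = E x then G x else E' x)"

lemma env_patch_same [simp]: "env_patch E E G = G"
  by (simp add: env_patch_def)

lemma env_patch_commute:
  assumes "elementary_update E E1" "elementary_update E E2"
    and "\<And>x. E x = None \<Longrightarrow> E1 x = None \<or> E2 x = None"
  shows "env_patch E E1 E2 = env_patch E E2 E1"
proof
  fix x
  show "env_patch E E1 E2 x = env_patch E E2 E1 x"
    using elementary_update_changed[OF assms(1), of x] elementary_update_changed[OF assms(2), of x]
      assms(3)[of x]
    by (cases "E1 x = E x"; cases "E2 x = E x") (auto simp: env_patch_def)
qed

lemma micro_frame:
  assumes "micro D T E P T' E'" "trues E \<subseteq> trues G"
    and "\<And>x. E x = None \<Longrightarrow> E' x \<noteq> None \<Longrightarrow> G x = None"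
  shows "micro D T G P T' (env_patch E E' G)"
  using assms
proof (induction rule: micro.induct)
  case (micro_emit s E)
  have "E s = Some True \<Longrightarrow> G s = Some True"
    using micro_emit.prems(1) unfolding trues_def by blast
  then have "env_patch E (E(s \<mapsto> True)) G = G(s \<mapsto> True)"
    unfolding env_patch_def by (auto intro!: ext)
  then show ?case by (metis micro.micro_emit)
next
  case (micro_local E s T)
  have "G s = None" using micro_local.prems(2)[of s] micro_local.hyps by simp
  moreover have "env_patch E (E(s \<mapsto> False)) G = G(s \<mapsto> False)"
    using micro_local.hyps by (auto simp: env_patch_def)
  ultimately show ?case by (metis micro.micro_local)
next
  case (micro_when_nil E r)
  then show ?case by (auto intro!: micro.micro_when_nil dest: envv_mono_trues)
next
  case (micro_when E r T P T' E')
  then show ?case by (auto intro!: micro.micro_when dest: envv_mono_trues)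
qed (auto intro: micro.intros)

lemma micro_renaming:
  assumes "micro D T E P T' E'" "wf_defs D" "bij \<pi>"
  shows "micro D (renT \<pi> T) (renE \<pi> E) (image_mset (renT \<pi>) P) (renT \<pi> T') (renE \<pi> E')"
  using assms
proof (induction rule: micro.induct)
  case (micro_emit s E)
  show ?case
    unfolding renE_fun_upd[OF \<open>bij \<pi>\<close>] renT.simps renr.simps image_mset_empty
    by (rule micro.micro_emit)
next
  case (micro_local E s T)
  show ?case
    unfolding renE_fun_upd[OF \<open>bij \<pi>\<close>] renT.simps renT_openT image_mset_empty
    by (rule micro.micro_local) (simp add: micro_local)
next
  case (micro_call A xs T ss E)
  then have "renT \<pi> (renT (substf xs ss) T) = renT (substf xs (map \<pi> ss)) T"
    by (simp add: renT_renT_substf wf_defs_sigT)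
  with micro_call show ?case using micro.micro_call[of D A xs T "map \<pi> ss"]
    by (simp add: comp_def)
next
  case (micro_when_nil E r)
  then show ?case by (auto intro!: micro.micro_when_nil simp: envv_renE)
next
  case (micro_when E r T P T' E')
  then show ?case by (auto intro!: micro.micro_when simp: envv_renE)
qed (auto intro: micro.intros)

lemma renaming_fixing_self:
  "T' = T \<Longrightarrow> P' = P \<Longrightarrow> E' = E \<Longrightarrow>
   \<exists>\<pi>. renaming_fixing A \<pi> \<and> T' = renT \<pi> T \<and> P' = image_mset (renT \<pi>) P \<and> E' = renE \<pi> E"
  by (rule exI[of _ id]) simp

lemma micro_unique_upto_renaming:
  assumes "micro D T E P1 T1 E1" "micro D T E P2 T2 E2" "sigT T \<subseteq> dom E"
  shows "\<exists>\<pi>. renaming_fixing (dom E) \<pi> \<and> T2 = renT \<pi> T1 \<and>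
             P2 = image_mset (renT \<pi>) P1 \<and> E2 = renE \<pi> E1"
  using assms
proof (induction arbitrary: P2 T2 E2 rule: micro.induct)
  case (micro_local E s X)
  from micro_local.prems(1) obtain s' where s': "E s' = None" "P2 = {#}"
      "T2 = openT 0 s' X" "E2 = E(s' \<mapsto> False)"
    by (rule micro_LocalE) auto
  then show ?case
    using fresh_local_renaming[OF micro_local.hyps s'(1)] micro_local.prems(2)
    by (metis image_mset_empty sigT.simps(3))
next
  case (micro_call A xs T ss E)
  from micro_call.prems(1) have "P2 = {#} \<and> T2 = renT (substf xs ss) T \<and> E2 = E"
    by (rule micro_CallE) (use micro_call.hyps in \<open>auto simp: inj_map_eq_map inj_def\<close>)
  then show ?case by (intro renaming_fixing_self) simp_all
next
  case (micro_when E r T P T' E')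
  from micro_when.prems(1) micro_when.hyps obtain T2' where
    "micro D T E P2 T2' E2" "T2 = When r T2'"
    by (auto elim: micro_WhenE)
  with micro_when.IH micro_when.prems(2) obtain \<pi> where \<pi>: "renaming_fixing (dom E) \<pi>"
      "T2' = renT \<pi> T'" "P2 = image_mset (renT \<pi>) P" "E2 = renE \<pi> E'"
    by fastforce
  then show ?case
    using \<open>T2 = When r T2'\<close> micro_when.prems(2) renaming_fixing_renr[OF \<pi>(1)] by auto
next
  case (micro_watch T E P T' E' r)
  from micro_watch.prems(1) micro_watch.hyps obtain T2' where
    "micro D T E P2 T2' E2" "T2 = Watch r T2'"
    by (auto elim: micro_WatchE)
  with micro_watch.IH micro_watch.prems(2) obtain \<pi> where \<pi>: "renaming_fixing (dom E) \<pi>"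
      "T2' = renT \<pi> T'" "P2 = image_mset (renT \<pi>) P" "E2 = renE \<pi> E'"
    by fastforce
  then show ?case
    using \<open>T2 = Watch r T2'\<close> micro_watch.prems(2) renaming_fixing_renr[OF \<pi>(1)] by auto
next
  case (micro_seq T1 E P T1' E' T3)
  from micro_seq.prems(1) micro_seq.hyps obtain T2' where
    "micro D T1 E P2 T2' E2" "T2 = Seq T2' T3"
    by (auto elim: micro_SeqE)
  with micro_seq.IH micro_seq.prems(2) obtain \<pi> where \<pi>: "renaming_fixing (dom E) \<pi>"
      "T2' = renT \<pi> T1'" "P2 = image_mset (renT \<pi>) P" "E2 = renE \<pi> E'"
    by fastforce
  then show ?case
    using \<open>T2 = Seq T2' T3\<close> micro_seq.prems(2) renaming_fixing_renT[OF \<pi>(1)] by auto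
next
  case (micro_emit s E)
  from micro_emit.prems(1) show ?case
    by (rule micro_EmitE) (rule renaming_fixing_self, simp_all)
next
  case (micro_spawn T E)
  from micro_spawn.prems(1) show ?case
    by (rule micro_SpawnE) (rule renaming_fixing_self, simp_all)
next
  case (micro_when_nil E r)
  from micro_when_nil.prems(1) have "P2 = {#} \<and> T2 = TNil \<and> E2 = E"
    by (rule micro_WhenE) auto
  then show ?case by (intro renaming_fixing_self) simp_all
next
  case (micro_watch_nil r E)
  from micro_watch_nil.prems(1) have "P2 = {#} \<and> T2 = TNil \<and> E2 = E"
    by (rule micro_WatchE) auto
  then show ?case by (intro renaming_fixing_self) simp_all
next
  case (micro_seq_nil T E)
  from micro_seq_nil.prems(1) have "P2 = {#} \<and> T2 = T \<and> E2 = E"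
    by (rule micro_SeqE) auto
  then show ?case by (intro renaming_fixing_self) simp_all
qed

lemma micro_rename_fresh:
  assumes "micro D T E P T' E'" "wf_defs D" "sigT T \<subseteq> dom E" "finite (dom E)" "finite B"
  obtains \<pi> where "renaming_fixing (dom E) \<pi>"
    "micro D T E (image_mset (renT \<pi>) P) (renT \<pi> T') (renE \<pi> E')"
    "\<And>x. E x = None \<Longrightarrow> renE \<pi> E' x \<noteq> None \<Longrightarrow> x \<notin> B"
proof (cases "\<exists>x. E x = None \<and> E' x \<noteq> None")
  case False
  then have "E x = None \<Longrightarrow> E' x \<noteq> None \<Longrightarrow> x \<notin> B" for x by blast
  with assms(1) show ?thesis by (intro that[of id]) simp_all
next
  case True
  then obtain x where x: "E x = None" "E' x \<noteq> None" by blast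
  have E': "E' = E(x \<mapsto> False)"
    using elementary_update_alloc[OF micro_elementary_update[OF assms(1,3)] x] .
  obtain y where y: "y \<notin> B \<union> dom E"
    using ex_new_if_finite[OF infinite_UNIV_nat] assms(4,5) by blast
  let ?\<pi> = "transpose x y"
  have fixing: "renaming_fixing (dom E) ?\<pi>"
    using x(1) y by (intro renaming_fixing_transpose) auto
  have "renT ?\<pi> T = T"
    using renaming_fixing_renT[OF fixing assms(3)] .
  moreover have E: "renE ?\<pi> E = E"
    using x(1) y by (intro renE_transpose_fresh) auto
  ultimately have step: "micro D T E (image_mset (renT ?\<pi>) P) (renT ?\<pi> T') (renE ?\<pi> E')"
    using micro_renaming[OF assms(1,2) bij_transpose[of x y]] by simp
  have E'_ren: "renE ?\<pi> E' = E(y \<mapsto> False)"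
    using E' E by (simp add: renE_fun_upd)
  show ?thesis
  proof (rule that[OF fixing step])
    show "z \<notin> B" if "E z = None" "renE ?\<pi> E' z \<noteq> None" for z
      using that y unfolding E'_ren by (cases "z = y") auto
  qed
qed

section \<open>Confluence of the pool semantics\<close>

type_synonym state = "thread multiset \<times> env"

inductive pool_step :: "tdefs \<Rightarrow> state \<Rightarrow> state \<Rightarrow> bool" for D :: tdefs where
  "T \<in># P \<Longrightarrow> micro D T E Q T' E' \<Longrightarrow> pool_step D (P, E) (P - {#T#} + {#T'#} + Q, E')"

lemma pool_stepI:
  "T \<in># P \<Longrightarrow> micro D T E Q T' E' \<Longrightarrow> S' = (P - {#T#} + {#T'#} + Q, E') \<Longrightarrow> pool_step D (P, E) S'"
  using pool_step.intros by blast

definition pool_final :: "tdefs \<Rightarrow> state \<Rightarrow> bool" where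
  "pool_final D S \<longleftrightarrow> (\<nexists>S'. pool_step D S S')"

definition wf_state :: "state \<Rightarrow> bool" where
  "wf_state S \<longleftrightarrow> finite (dom (snd S)) \<and> sigP (fst S) \<subseteq> dom (snd S)"

lemma micro_commute:
  assumes "t \<in># P" "u \<in># P - {#t#}"
    and t: "micro D t E Pt t' Et" and u: "micro D u E Pu u' Eu"
    and "sigT t \<subseteq> dom E" "sigT u \<subseteq> dom E"
    and disjoint: "\<And>x. E x = None \<Longrightarrow> Et x = None \<or> Eu x = None"
  shows "\<exists>S. pool_step D (P - {#t#} + {#t'#} + Pt, Et) S \<and>
             pool_step D (P - {#u#} + {#u'#} + Pu, Eu) S"
proof -
  obtain Q where P: "P = add_mset t (add_mset u Q)"
    using assms(1,2) by (metis insert_DiffM)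
  define G where "G = env_patch E Eu Et"
  have G': "env_patch E Et Eu = G"
    unfolding G_def using disjoint
    by (intro env_patch_commute micro_elementary_update[OF t] micro_elementary_update[OF u]
        assms(5,6)) auto
  have "micro D u Et Pu u' G"
    unfolding G_def
  proof (rule micro_frame[OF u micro_trues_mono[OF t]])
    show "Et x = None" if "E x = None" "Eu x \<noteq> None" for x
      using disjoint[OF that(1)] that(2) by simp
  qed
  moreover have "micro D t Eu Pt t' G"
    unfolding G'[symmetric]
  proof (rule micro_frame[OF t micro_trues_mono[OF u]])
    show "Eu x = None" if "E x = None" "Et x \<noteq> None" for x
      using disjoint[OF that(1)] that(2) by simp
  qed
  moreover have "u \<in># P - {#t#} + {#t'#} + Pt" "t \<in># P - {#u#} + {#u'#} + Pu"
    by (simp_all add: P)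
  moreover have "P - {#t#} + {#t'#} + Pt - {#u#} + {#u'#} + Pu =
      P - {#u#} + {#u'#} + Pu - {#t#} + {#t'#} + Pt"
    by (simp add: P)
  ultimately show ?thesis
    using pool_step.intros[of u "P - {#t#} + {#t'#} + Pt" D Et Pu u' G]
      pool_step.intros[of t "P - {#u#} + {#u'#} + Pu" D Eu Pt t' G]
    by auto
qed

definition renS :: "(sig \<Rightarrow> sig) \<Rightarrow> state \<Rightarrow> state" where
  "renS \<pi> S = (image_mset (renT \<pi>) (fst S), renE \<pi> (snd S))"

lemma renS_comp: "bij \<pi> \<Longrightarrow> bij \<sigma> \<Longrightarrow> renS \<pi> (renS \<sigma> S) = renS (\<pi> \<circ> \<sigma>) S"
  by (simp add: renS_def renE_comp renT_comp multiset.map_comp comp_def)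

lemma renS_inv [simp]: "bij \<pi> \<Longrightarrow> renS (inv \<pi>) (renS \<pi> S) = S"
  by (simp add: renS_comp bij_imp_bij_inv bij_is_inj) (simp add: renS_def)

definition ren_equiv :: "sig set \<Rightarrow> state \<Rightarrow> state \<Rightarrow> bool" where
  "ren_equiv A S S' \<longleftrightarrow> (\<exists>\<pi>. renaming_fixing A \<pi> \<and> S' = renS \<pi> S)"

lemma ren_equiv_refl: "ren_equiv A S S"
  unfolding ren_equiv_def by (rule exI[of _ id]) (simp add: renS_def)

lemma ren_equiv_trans: "ren_equiv A S1 S2 \<Longrightarrow> ren_equiv A S2 S3 \<Longrightarrow> ren_equiv A S1 S3"
  unfolding ren_equiv_def
  by (metis renS_comp renaming_fixing_comp renaming_fixing_def)

lemma ren_equiv_subset: "ren_equiv B S S' \<Longrightarrow> A \<subseteq> B \<Longrightarrow> ren_equiv A S S'"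
  unfolding ren_equiv_def by (metis renaming_fixing_subset)

lemma pool_final_no_step: "pool_final D S \<Longrightarrow> \<not> pool_step D S S'"
  unfolding pool_final_def by blast

lemma pool_step_renaming:
  assumes "pool_step D S S'" "wf_defs D" "bij \<pi>"
  shows "pool_step D (renS \<pi> S) (renS \<pi> S')"
  using assms(1)
proof cases
  case (1 T P E Q T' E')
  show ?thesis
    unfolding 1 renS_def fst_conv snd_conv
    by (rule pool_stepI[OF _ micro_renaming[OF 1(4) assms(2,3)]])
      (simp_all add: 1(3) image_mset_Diff)
qed

lemma pool_final_renaming:
  assumes "pool_final D S" "wf_defs D" "bij \<pi>"
  shows "pool_final D (renS \<pi> S)"
  unfolding pool_final_def
proof
  assume "\<exists>S'. pool_step D (renS \<pi> S) S'"
  then obtain S' where "pool_step D (renS \<pi> S) S'" ..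
  then have "pool_step D S (renS (inv \<pi>) S')"
    using pool_step_renaming[OF _ assms(2) bij_imp_bij_inv[OF assms(3)]] assms(3) by fastforce
  with assms(1) show False unfolding pool_final_def by blast
qed

lemma pool_run_renaming:
  "(pool_step D ^^ n) S R \<Longrightarrow> wf_defs D \<Longrightarrow> bij \<pi> \<Longrightarrow> (pool_step D ^^ n) (renS \<pi> S) (renS \<pi> R)"
proof (induction n arbitrary: S)
  case (Suc n)
  then obtain S1 where "pool_step D S S1" "(pool_step D ^^ n) S1 R"
    using relpowp_Suc_D2 by metis
  with Suc show ?case by (metis relpowp_Suc_I2 pool_step_renaming)
qed simp

lemma ren_equiv_final_run:
  assumes "ren_equiv A S S'" "(pool_step D ^^ n) S R" "pool_final D R" "wf_defs D"
  shows "\<exists>R'. (pool_step D ^^ n) S' R' \<and> pool_final D R' \<and> ren_equiv A R R'"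
proof -
  obtain \<pi> where \<pi>: "renaming_fixing A \<pi>" "S' = renS \<pi> S"
    using assms(1) by (auto simp: ren_equiv_def)
  then have "bij \<pi>" by (simp add: renaming_fixing_def)
  then have "(pool_step D ^^ n) S' (renS \<pi> R)" "pool_final D (renS \<pi> R)"
    using \<pi>(2) pool_run_renaming[OF assms(2,4)] pool_final_renaming[OF assms(3,4)] by simp_all
  moreover have "ren_equiv A R (renS \<pi> R)"
    using \<pi>(1) unfolding ren_equiv_def by blast
  ultimately show ?thesis by blast
qed

lemma pool_step_dom_mono: "pool_step D S S' \<Longrightarrow> dom (snd S) \<subseteq> dom (snd S')"
  by (induction rule: pool_step.induct) (simp add: micro_dom_mono)

lemma pool_step_wf_state:
  assumes "pool_step D S S'" "wf_defs D" "wf_state S"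
  shows "wf_state S'"
  using assms(1)
proof cases
  case (1 T P E Q T' E')
  from assms(3) 1 have fin: "finite (dom E)" and sig: "sigP P \<subseteq> dom E"
    by (simp_all add: wf_state_def)
  have sigT: "sigT T \<subseteq> dom E"
    using sig sigT_subset_sigP[OF 1(3)] by blast
  have "finite (dom E')"
    using elementary_update_finite_dom[OF micro_elementary_update[OF 1(4) sigT] fin] .
  moreover have "sigT T' \<union> sigP Q \<subseteq> dom E'"
    using micro_sig_closed[OF 1(4) assms(2) sigT] .
  moreover have "sigP (P - {#T#}) \<subseteq> dom E'"
    using sigP_diff_subset[of P "{#T#}"] sig micro_dom_mono[OF 1(4)] by blast
  ultimately show ?thesis
    using 1(2) by (simp add: wf_state_def)
qed

lemma pool_step_diamond:
  assumes "t \<in># P" "u \<in># P - {#t#}"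
    and t: "micro D t E Pt t' Et" and u: "micro D u E Pu u' Eu"
    and "wf_state (P, E)" "wf_defs D"
  shows "\<exists>X Y. pool_step D (P - {#t#} + {#t'#} + Pt, Et) X \<and>
               pool_step D (P - {#u#} + {#u'#} + Pu, Eu) Y \<and> ren_equiv (dom E) X Y"
proof -
  from assms(5) have fin: "finite (dom E)" and sig: "sigP P \<subseteq> dom E"
    by (simp_all add: wf_state_def)
  have sig_t: "sigT t \<subseteq> dom E" and sig_u: "sigT u \<subseteq> dom E"
    using assms(1,2) sig sigT_subset_sigP by (blast dest: in_diffD)+
  have "finite (dom Et)"
    using elementary_update_finite_dom[OF micro_elementary_update[OF t sig_t] fin] .
  \<comment> \<open>The two steps might allocate the same fresh signal; rename the one of u away from it.\<close>
  then obtain \<pi> where \<pi>: "renaming_fixing (dom E) \<pi>"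
    and u_ren: "micro D u E (image_mset (renT \<pi>) Pu) (renT \<pi> u') (renE \<pi> Eu)"
    and fresh: "\<And>x. E x = None \<Longrightarrow> renE \<pi> Eu x \<noteq> None \<Longrightarrow> x \<notin> dom Et"
    using micro_rename_fresh[OF u assms(6) sig_u fin] by blast
  have "Et x = None \<or> renE \<pi> Eu x = None" if "E x = None" for x
    using fresh[OF that] by blast
  then obtain S3 where S3: "pool_step D (P - {#t#} + {#t'#} + Pt, Et) S3"
      "pool_step D (P - {#u#} + {#renT \<pi> u'#} + image_mset (renT \<pi>) Pu, renE \<pi> Eu) S3"
    using micro_commute[OF assms(1,2) t u_ren sig_t sig_u] by blast
  have "image_mset (renT \<pi>) (P - {#u#}) = P - {#u#}"
    using sig sigP_diff_subset[of P "{#u#}"] by (blast intro: renaming_fixing_image_mset[OF \<pi>])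
  then have "(P - {#u#} + {#renT \<pi> u'#} + image_mset (renT \<pi>) Pu, renE \<pi> Eu) =
      renS \<pi> (P - {#u#} + {#u'#} + Pu, Eu)"
    by (simp add: renS_def)
  moreover have "bij \<pi>" using \<pi> by (simp add: renaming_fixing_def)
  ultimately have "pool_step D (P - {#u#} + {#u'#} + Pu, Eu) (renS (inv \<pi>) S3)"
    using pool_step_renaming[OF S3(2) assms(6) bij_imp_bij_inv[OF \<open>bij \<pi>\<close>]] by simp
  moreover have "ren_equiv (dom E) S3 (renS (inv \<pi>) S3)"
    using renaming_fixing_inv[OF \<pi>] unfolding ren_equiv_def by blast
  ultimately show ?thesis using S3(1) by blast
qed

lemma pool_step_local_confluence:
  assumes step1: "pool_step D S S1" and step2: "pool_step D S S2"
    and "wf_state S" "wf_defs D"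
  shows "ren_equiv (dom (snd S)) S1 S2 \<or>
         (\<exists>X Y. pool_step D S1 X \<and> pool_step D S2 Y \<and> ren_equiv (dom (snd S)) X Y)"
proof -
  obtain P E t Pt t' Et where S: "S = (P, E)" and t: "t \<in># P" "micro D t E Pt t' Et"
    and S1: "S1 = (P - {#t#} + {#t'#} + Pt, Et)"
    using step1 by (cases rule: pool_step.cases) blast
  obtain u Pu u' Eu where u: "u \<in># P" "micro D u E Pu u' Eu"
    and S2: "S2 = (P - {#u#} + {#u'#} + Pu, Eu)"
    using step2 S by (cases rule: pool_step.cases) auto
  show ?thesis
  proof (cases "t = u")
    case True
    have sig: "sigP P \<subseteq> dom E" using assms(3) S by (simp add: wf_state_def)
    then have "sigT t \<subseteq> dom E" using t(1) sigT_subset_sigP by blast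
    then obtain \<pi> where \<pi>: "renaming_fixing (dom E) \<pi>" "u' = renT \<pi> t'"
      "Pu = image_mset (renT \<pi>) Pt" "Eu = renE \<pi> Et"
      using micro_unique_upto_renaming[OF t(2)] u(2) True by blast
    have "image_mset (renT \<pi>) (P - {#t#}) = P - {#t#}"
      using sig sigP_diff_subset[of P "{#t#}"] by (blast intro: renaming_fixing_image_mset[OF \<pi>(1)])
    then have "S2 = renS \<pi> S1"
      using S1 S2 \<pi> True by (simp add: renS_def)
    then show ?thesis using \<pi>(1) S unfolding ren_equiv_def by auto
  next
    case False
    then have "u \<in># P - {#t#}" using u(1) by (simp add: in_diff_count)
    then show ?thesis
      using pool_step_diamond[OF t(1) _ t(2) u(2)] assms(3,4) S S1 S2 by auto
  qed
qed

lemma final_run_from_successor: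
  assumes "(pool_step D ^^ n) S R" "pool_final D R" "pool_step D S S1" "wf_state S" "wf_defs D"
  shows "\<exists>m R'. n = Suc m \<and> (pool_step D ^^ m) S1 R' \<and> pool_final D R' \<and>
                ren_equiv (dom (snd S)) R R'"
  using assms
proof (induction n arbitrary: S S1)
  case 0
  then show ?case using pool_final_no_step by simp
next
  case (Suc n)
  then obtain S2 where S2: "pool_step D S S2" "(pool_step D ^^ n) S2 R"
    using relpowp_Suc_D2 by metis
  from pool_step_local_confluence[OF S2(1) Suc.prems(3-5)] show ?case
  proof
    assume "ren_equiv (dom (snd S)) S2 S1"
    then show ?thesis using ren_equiv_final_run S2(2) Suc.prems(2,5) by blast
  next
    assume "\<exists>X Y. pool_step D S2 X \<and> pool_step D S1 Y \<and> ren_equiv (dom (snd S)) X Y"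
    then obtain X Y where XY: "pool_step D S2 X" "pool_step D S1 Y" "ren_equiv (dom (snd S)) X Y"
      by blast
    have dom_S2: "dom (snd S) \<subseteq> dom (snd S2)" using pool_step_dom_mono[OF S2(1)] .
    obtain m RX where RX: "n = Suc m" "(pool_step D ^^ m) X RX" "pool_final D RX"
        "ren_equiv (dom (snd S2)) R RX"
      using Suc.IH[OF S2(2) Suc.prems(2) XY(1) pool_step_wf_state[OF S2(1) Suc.prems(5,4)]
          Suc.prems(5)] by blast
    obtain RY where RY: "(pool_step D ^^ m) Y RY" "pool_final D RY" "ren_equiv (dom (snd S)) RX RY"
      using ren_equiv_final_run[OF XY(3) RX(2,3) Suc.prems(5)] by blast
    have "ren_equiv (dom (snd S)) R RY"
      using ren_equiv_trans[OF ren_equiv_subset[OF RX(4) dom_S2] RY(3)] .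
    then show ?thesis using RX(1) RY(1,2) relpowp_Suc_I2[OF XY(2) RY(1)] by blast
  qed
qed

lemma final_runs_ren_equiv:
  assumes "(pool_step D)\<^sup>*\<^sup>* S R2" "(pool_step D ^^ n) S R1" "pool_final D R1" "pool_final D R2"
    "wf_state S" "wf_defs D"
  shows "ren_equiv (dom (snd S)) R1 R2"
  using assms
proof (induction arbitrary: n R1 rule: converse_rtranclp_induct)
  case base
  have "n = 0"
  proof (cases n)
    case (Suc m)
    then show ?thesis
      using base.prems(1,3) relpowp_Suc_D2 pool_final_no_step by metis
  qed
  then show ?case using base.prems(1) ren_equiv_refl by simp
next
  case (step S S2)
  obtain m R1' where R1': "(pool_step D ^^ m) S2 R1'" "pool_final D R1'"
      "ren_equiv (dom (snd S)) R1 R1'"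
    using final_run_from_successor[OF step.prems(1,2) step.hyps(1) step.prems(4,5)] by blast
  have "ren_equiv (dom (snd S2)) R1' R2"
    using step.IH[OF R1'(1,2) step.prems(3) pool_step_wf_state[OF step.hyps(1) step.prems(5,4)]
        step.prems(5)] .
  then have "ren_equiv (dom (snd S)) R1' R2"
    using ren_equiv_subset pool_step_dom_mono[OF step.hyps(1)] by blast
  then show ?case using ren_equiv_trans[OF R1'(3)] by blast
qed

section \<open>Atomic steps and instants\<close>

inductive micro_steps :: "tdefs \<Rightarrow> thread \<Rightarrow> env \<Rightarrow> thread multiset \<Rightarrow> thread \<Rightarrow> env \<Rightarrow> bool"
  for D :: tdefs where
  micro_steps_refl: "micro_steps D T E {#} T E"
| micro_steps_step: "micro D T E P1 T1 E1 \<Longrightarrow> micro_steps D T1 E1 P2 T2 E2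
    \<Longrightarrow> micro_steps D T E (P1 + P2) T2 E2"

lemma micro_steps_single: "micro D T E P T' E' \<Longrightarrow> micro_steps D T E P T' E'"
  using micro_steps_step[OF _ micro_steps_refl] by fastforce

lemma micro_steps_trans:
  "micro_steps D T E P1 T1 E1 \<Longrightarrow> micro_steps D T1 E1 P2 T2 E2 \<Longrightarrow> micro_steps D T E (P1 + P2) T2 E2"
  by (induction rule: micro_steps.induct) (auto simp: add.assoc intro: micro_steps_step)

lemma micro_steps_seq: "micro_steps D T E P T' E' \<Longrightarrow> micro_steps D (Seq T X) E P (Seq T' X) E'"
  by (induction rule: micro_steps.induct) (auto intro: micro_steps.intros micro.intros)

lemma micro_steps_watch: "micro_steps D T E P T' E' \<Longrightarrow> micro_steps D (Watch r T) E P (Watch r T') E'"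
  by (induction rule: micro_steps.induct) (auto intro: micro_steps.intros micro.intros)

lemma micro_steps_when:
  "micro_steps D T E P T' E' \<Longrightarrow> envv E r = Some True \<Longrightarrow> micro_steps D (When r T) E P (When r T') E'"
proof (induction rule: micro_steps.induct)
  case (micro_steps_step T E P1 T1 E1 P2 T2 E2)
  then have "envv E1 r = Some True"
    using micro_trues_mono envv_mono_trues by blast
  with micro_steps_step show ?case by (auto intro: micro_steps.micro_steps_step micro.micro_when)
qed (rule micro_steps_refl)

lemma step_trues_mono: "step D T E P T' E' \<Longrightarrow> trues E \<subseteq> trues E'"
proof (induction rule: step.induct)
  case (T3 E s T P T' E')
  have "trues E \<subseteq> trues (E(s \<mapsto> False))" using T3.hyps(1) by (auto simp: trues_def)
  with T3.IH show ?case by blast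
next
  case (T11 T1 E P1 E1 T2 P2 T' E')
  then show ?case by blast
qed (auto simp: trues_def)

lemma step_micro_steps: "step D T E P T' E' \<Longrightarrow> micro_steps D T E P T' E'"
proof (induction rule: step.induct)
  case (T2 s E)
  show ?case by (rule micro_steps_single) (rule micro_emit)
next
  case (T3 E s T P T' E')
  then show ?case using micro_steps_step[OF micro_local[of E s D T, OF T3(1)] T3(3)] by simp
next
  case (T5 A xs T ss E P T' E')
  then show ?case using micro_steps_step[OF micro_call[of D A xs T ss E, OF T5(1,2)] T5(4)] by simp
next
  case (T7 E r T P E')
  then have "envv E' r = Some True"
    using step_trues_mono envv_mono_trues by blast
  then show ?case
    using micro_steps_trans[OF micro_steps_when[OF T7(3,1)] micro_steps_single[OF micro_when_nil]]
    by simp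
next
  case (T9 T E P E' r)
  then show ?case
    using micro_steps_trans[OF micro_steps_watch[OF T9(2)] micro_steps_single[OF micro_watch_nil]]
    by simp
next
  case (T11 T1 E P1 E1 T2 P2 T' E')
  then show ?case
    using micro_steps_trans[OF micro_steps_seq[OF T11(3)] micro_steps_step[OF micro_seq_nil T11(4)]]
    by simp
qed (auto intro: micro_steps_refl micro_steps_single micro_steps_when micro_steps_watch
      micro_steps_seq micro.intros)

lemma step_result_micro_final: "step D T E P T' E' \<Longrightarrow> \<not> micro D T' E' P2 T2 E2"
  by (induction arbitrary: P2 T2 E2 rule: step.induct)
    (auto elim: micro_WhenE micro_WatchE micro_SeqE)

lemma micro_steps_pool_steps:
  "micro_steps D t E Pt t' E' \<Longrightarrow> t \<in># P \<Longrightarrow> (pool_step D)\<^sup>*\<^sup>* (P, E) (P - {#t#} + {#t'#} + Pt, E')"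
proof (induction arbitrary: P rule: micro_steps.induct)
  case (micro_steps_step T E P1 T1 E1 P2 T2 E2)
  have "pool_step D (P, E) (P - {#T#} + {#T1#} + P1, E1)"
    using micro_steps_step.prems micro_steps_step.hyps(1) by (rule pool_step.intros)
  moreover have "(pool_step D)\<^sup>*\<^sup>* (P - {#T#} + {#T1#} + P1, E1)
      (P - {#T#} + {#T1#} + P1 - {#T1#} + {#T2#} + P2, E2)"
    using micro_steps_step.IH[of "P - {#T#} + {#T1#} + P1"] by simp
  moreover have "P - {#T#} + {#T1#} + P1 - {#T1#} + {#T2#} + P2 = P - {#T#} + {#T2#} + (P1 + P2)"
    by (simp add: add.commute add.left_commute)
  ultimately show ?case by (metis converse_rtranclp_into_rtranclp)
qed simp

lemma instant_final_run:
  "instant D P E P'' E'' \<Longrightarrow>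
   \<exists>Pf. (pool_step D)\<^sup>*\<^sup>* (P, E) (Pf, E'') \<and> pool_final D (Pf, E'') \<and>
        P'' = image_mset (abortT E'') Pf"
proof (induction rule: instant.induct)
  case (P1 P E)
  then have "pool_final D (P, E)"
    unfolding pool_final_def stuck_def
    by (auto elim!: pool_step.cases dest: step_result_micro_final)
  then show ?case by blast
next
  case (P2 T P E P' T' E' P'' E'')
  then obtain Pf where "(pool_step D)\<^sup>*\<^sup>* (P - {#T#} + {#T'#} + P', E') (Pf, E'')"
    "pool_final D (Pf, E'')" "P'' = image_mset (abortT E'') Pf"
    by blast
  then show ?case
    using micro_steps_pool_steps[OF step_micro_steps[OF P2(3)] P2(1)] rtranclp_trans by metis
qed

section \<open>Determinism\<close>

lemma dom_init_env: "I \<subseteq> Intf \<Longrightarrow> dom (init_env Intf I P) = Intf \<union> sigP P"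
  unfolding init_env_def dom_def by auto

lemma eq_ren_renaming: "renaming_fixing Intf \<pi> \<Longrightarrow> eq_ren Intf P (image_mset (renT \<pi>) P)"
  unfolding eq_ren_def renaming_fixing_def sigP_image_renT
  by (metis IntD2 bij_betw_imageI bij_is_inj inj_on_subset subset_UNIV)

lemma ren_equiv_instant_result:
  assumes "ren_equiv A (Pf1, F1) (Pf2, F2)" "Intf \<subseteq> A"
  shows "{s \<in> Intf. F1 s = Some True} = {s \<in> Intf. F2 s = Some True} \<and>
         eq_ren Intf (image_mset (abortT F1) Pf1) (image_mset (abortT F2) Pf2)"
proof -
  obtain \<pi> where \<pi>: "renaming_fixing A \<pi>" "F2 = renE \<pi> F1" "Pf2 = image_mset (renT \<pi>) Pf1"
    using assms(1) unfolding ren_equiv_def renS_def by auto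
  have fixing: "renaming_fixing Intf \<pi>"
    using renaming_fixing_subset[OF \<pi>(1) assms(2)] .
  then have "bij \<pi>" and fixes_Intf: "\<And>s. s \<in> Intf \<Longrightarrow> \<pi> s = s"
    by (simp_all add: renaming_fixing_def)
  have "F2 s = F1 s" if "s \<in> Intf" for s
    using renE_apply[OF \<open>bij \<pi>\<close>, of F1 s] fixes_Intf[OF that] \<pi>(2) by simp
  moreover have "image_mset (abortT F2) Pf2 = image_mset (renT \<pi>) (image_mset (abortT F1) Pf1)"
    using \<pi>(2,3) by (simp add: multiset.map_comp comp_def abortT_renT[OF \<open>bij \<pi>\<close>])
  ultimately show ?thesis
    using eq_ren_renaming[OF fixing] by auto
qed

lemma io_trans_unique_upto_renaming:
  assumes "wf_defs D" "finite Intf"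
    and "io_trans D Intf P I O1 P1" "io_trans D Intf P I O2 P2"
  shows "O1 = O2 \<and> eq_ren Intf P1 P2"
proof -
  let ?E = "init_env Intf I P"
  obtain F1 F2 where I: "I \<subseteq> Intf"
    and F1: "instant D P ?E P1 F1" "O1 = {s \<in> Intf. F1 s = Some True}"
    and F2: "instant D P ?E P2 F2" "O2 = {s \<in> Intf. F2 s = Some True}"
    using assms(3,4) unfolding io_trans_def by blast
  have dom: "dom ?E = Intf \<union> sigP P" using I by (rule dom_init_env)
  then have wf: "wf_state (P, ?E)" using assms(2) finite_sigP by (simp add: wf_state_def)
  obtain Pf1 Pf2 where
    run1: "(pool_step D)\<^sup>*\<^sup>* (P, ?E) (Pf1, F1)" "pool_final D (Pf1, F1)"
      "P1 = image_mset (abortT F1) Pf1"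
    and run2: "(pool_step D)\<^sup>*\<^sup>* (P, ?E) (Pf2, F2)" "pool_final D (Pf2, F2)"
      "P2 = image_mset (abortT F2) Pf2"
    using instant_final_run[OF F1(1)] instant_final_run[OF F2(1)] by blast
  obtain n where "(pool_step D ^^ n) (P, ?E) (Pf1, F1)"
    using run1(1) rtranclp_power by metis
  then have "ren_equiv (dom ?E) (Pf1, F1) (Pf2, F2)"
    using final_runs_ren_equiv[OF run2(1) _ run1(2) run2(2) wf assms(1)] by simp
  then show ?thesis
    using ren_equiv_instant_result[of "dom ?E"] F1(2) F2(2) run1(3) run2(3) dom by auto
qed

theorem proposition1:
  fixes D :: tdefs and Intf :: "sig set" and P :: "thread multiset"
  assumes "wf_defs D" and "finite Intf" and "program P"
  shows "deterministic D Intf P"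
  using io_trans_unique_upto_renaming[OF assms(1,2)]
  by (coinduction arbitrary: P rule: deterministic.coinduct) blast

end
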